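(* Let $(X,d)$ and $(Y,d')$ be metric spaces, $x_0\in X$, $y_0\in Y$, $n\geq 1$, with induced pseudometrics $\rho$ on $\pi_n(X,x_0)$ and $\rho'$ on $\pi_n(Y,y_0)$. If $f:(X,d)\to(Y,d')$ is uniformly continuous with $f(x_0)=y_0$, then the induced homomorphism $f_\#:(\pi_n(X,x_0),\rho)\to(\pi_n(Y,y_0),\rho')$ is uniformly continuous.
   Context: For a metric space $(Z,\delta)$ with basepoint $z_0$, $\Omega^n(Z,z_0)$ is the set of continuous maps $\alpha:[0,1]^n\to Z$ with $\alpha(\partial[0,1]^n)=\{z_0\}$, with uniform metric $\mu(\alpha,\beta)=\sup_{t}\delta(\alpha(t),\beta(t))$, and the induced pseudometric on $\pi_n(Z,z_0)$ is $\rho(a,b)=\inf\{\mu(\alpha,\beta)\mid\alpha\in a,\beta\in b\}$. *)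

theory Defs
  imports "HOL-Analysis.Analysis"
begin

text \<open>The dimension n >= 1 is encoded by a finite index type 'n; the cube [0,1]^n
  is cbox 0 1 in real^'n, and its boundary is its frontier.\<close>

definition unit_cube :: "(real^'n) set" where
  "unit_cube = cbox 0 1"

definition Omega :: "'a::metric_space \<Rightarrow> (real^'n \<Rightarrow> 'a) set" where
  "Omega z0 = {\<alpha>. continuous_on unit_cube \<alpha> \<and> \<alpha> ` frontier unit_cube \<subseteq> {z0}}"

definition rel_homotopic :: "'a::metric_space \<Rightarrow> (real^'n \<Rightarrow> 'a) \<Rightarrow> (real^'n \<Rightarrow> 'a) \<Rightarrow> bool" where
  "rel_homotopic z0 \<alpha> \<beta> =
     homotopic_with_canon (\<lambda>h. h ` frontier unit_cube \<subseteq> {z0}) unit_cube UNIV \<alpha> \<beta>"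

definition homclass :: "'a::metric_space \<Rightarrow> (real^'n \<Rightarrow> 'a) \<Rightarrow> (real^'n \<Rightarrow> 'a) set" where
  "homclass z0 \<alpha> = {\<beta> \<in> Omega z0. rel_homotopic z0 \<alpha> \<beta>}"

definition pi_n :: "'a::metric_space \<Rightarrow> (real^'n \<Rightarrow> 'a) set set" where
  "pi_n z0 = {homclass z0 \<alpha> | \<alpha>. \<alpha> \<in> Omega z0}"

definition mu :: "(real^'n \<Rightarrow> 'a::metric_space) \<Rightarrow> (real^'n \<Rightarrow> 'a) \<Rightarrow> real" where
  "mu \<alpha> \<beta> = (SUP t\<in>unit_cube. dist (\<alpha> t) (\<beta> t))"

definition rho :: "(real^'n \<Rightarrow> 'a::metric_space) set \<Rightarrow> (real^'n \<Rightarrow> 'a) set \<Rightarrow> real" where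
  "rho a b = Inf {mu \<alpha> \<beta> | \<alpha> \<beta>. \<alpha> \<in> a \<and> \<beta> \<in> b}"

definition induced :: "('a::metric_space \<Rightarrow> 'b::metric_space) \<Rightarrow> 'b \<Rightarrow>
    (real^'n \<Rightarrow> 'a) set \<Rightarrow> (real^'n \<Rightarrow> 'b) set" where
  "induced f y0 a = (\<Union>\<alpha>\<in>a. homclass y0 (f \<circ> \<alpha>))"

end

theory Submission
  imports Defs
begin

(* Since rho is an infimum, a and b have representatives alpha and beta with
   mu alpha beta < delta, delta being a modulus of uniform continuity of f for e/2.
   Then f o alpha and f o beta represent f_# a and f_# b and are pointwise
   e/2-close, so rho (f_# a) (f_# b) <= e/2 < e. *)

lemma zero_in_unit_cube: "(0::real^'n) \<in> unit_cube"
  by (simp add: unit_cube_def mem_box_cart)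

lemma continuous_on_Omega: "\<alpha> \<in> Omega z0 \<Longrightarrow> continuous_on unit_cube \<alpha>"
  by (simp add: Omega_def)

lemma comp_in_Omega:
  assumes "continuous_on UNIV f" "f x0 = y0" "\<alpha> \<in> Omega x0"
  shows "f \<circ> \<alpha> \<in> Omega y0"
proof -
  have "continuous_on unit_cube (f \<circ> \<alpha>)"
    using assms(1,3) continuous_on_Omega continuous_on_compose continuous_on_subset by blast
  moreover have "(f \<circ> \<alpha>) ` frontier unit_cube \<subseteq> {y0}"
    using assms(2,3) unfolding Omega_def by auto
  ultimately show ?thesis
    unfolding Omega_def by auto
qed

lemma homclass_subset_Omega: "homclass z0 \<alpha> \<subseteq> Omega z0"
  by (auto simp: homclass_def)

lemma homclass_refl: "\<alpha> \<in> Omega z0 \<Longrightarrow> \<alpha> \<in> homclass z0 \<alpha>"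
  unfolding homclass_def rel_homotopic_def Omega_def by auto

lemma pi_n_elem_nonempty: "a \<in> pi_n z0 \<Longrightarrow> a \<noteq> {}"
  unfolding pi_n_def using homclass_refl by blast

lemma pi_n_elem_subset_Omega: "a \<in> pi_n z0 \<Longrightarrow> a \<subseteq> Omega z0"
  unfolding pi_n_def using homclass_subset_Omega by blast

lemma induced_subset_Omega: "induced f y0 a \<subseteq> Omega y0"
  unfolding induced_def using homclass_subset_Omega by blast

lemma comp_in_induced:
  assumes "continuous_on UNIV f" "f x0 = y0" "\<alpha> \<in> a" "\<alpha> \<in> Omega x0"
  shows "f \<circ> \<alpha> \<in> induced f y0 a"
  unfolding induced_def using assms(3) homclass_refl[OF comp_in_Omega[OF assms(1,2,4)]] by blast

lemma bdd_above_dist_on_unit_cube: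
  fixes \<alpha> \<beta> :: "real^'n \<Rightarrow> 'a::metric_space"
  assumes "continuous_on unit_cube \<alpha>" "continuous_on unit_cube \<beta>"
  shows "bdd_above ((\<lambda>t. dist (\<alpha> t) (\<beta> t)) ` unit_cube)"
proof -
  have "continuous_on unit_cube (\<lambda>t. dist (\<alpha> t) (\<beta> t))"
    using assms by (intro continuous_intros)
  then have "compact ((\<lambda>t. dist (\<alpha> t) (\<beta> t)) ` unit_cube)"
    by (rule compact_continuous_image) (simp add: unit_cube_def)
  then show ?thesis
    by (intro bounded_imp_bdd_above compact_imp_bounded)
qed

lemma dist_le_mu:
  fixes \<alpha> \<beta> :: "real^'n \<Rightarrow> 'a::metric_space"
  assumes "continuous_on unit_cube \<alpha>" "continuous_on unit_cube \<beta>" "t \<in> unit_cube"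
  shows "dist (\<alpha> t) (\<beta> t) \<le> mu \<alpha> \<beta>"
  unfolding mu_def using bdd_above_dist_on_unit_cube[OF assms(1,2)] assms(3)
  by (rule cSUP_upper2) simp

lemma mu_nonneg:
  fixes \<alpha> \<beta> :: "real^'n \<Rightarrow> 'a::metric_space"
  assumes "continuous_on unit_cube \<alpha>" "continuous_on unit_cube \<beta>"
  shows "0 \<le> mu \<alpha> \<beta>"
  using dist_le_mu[OF assms zero_in_unit_cube] zero_le_dist order_trans by blast

lemma mu_le:
  fixes \<alpha> \<beta> :: "real^'n \<Rightarrow> 'a::metric_space"
  assumes "\<And>t. t \<in> unit_cube \<Longrightarrow> dist (\<alpha> t) (\<beta> t) \<le> c"
  shows "mu \<alpha> \<beta> \<le> c"
  unfolding mu_def using zero_in_unit_cube assms by (intro cSUP_least) auto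

lemma mu_comp_le:
  fixes \<alpha> \<beta> :: "real^'n \<Rightarrow> 'a::metric_space" and f :: "'a \<Rightarrow> 'b::metric_space"
  assumes "continuous_on unit_cube \<alpha>" "continuous_on unit_cube \<beta>" "mu \<alpha> \<beta> < d"
    and "\<And>x x'. dist x x' < d \<Longrightarrow> dist (f x) (f x') \<le> e"
  shows "mu (f \<circ> \<alpha>) (f \<circ> \<beta>) \<le> e"
  using assms dist_le_mu[OF assms(1,2)] by (intro mu_le) force

lemma rho_le_mu:
  fixes a b :: "(real^'n \<Rightarrow> 'a::metric_space) set"
  assumes "a \<subseteq> Omega z0" "b \<subseteq> Omega z0" "\<alpha> \<in> a" "\<beta> \<in> b"
  shows "rho a b \<le> mu \<alpha> \<beta>"
proof -
  have "bdd_below {mu \<gamma> \<eta> | \<gamma> \<eta>. \<gamma> \<in> a \<and> \<eta> \<in> b}"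
    using assms(1,2) by (intro bdd_belowI[of _ 0]) (auto intro!: mu_nonneg continuous_on_Omega)
  then show ?thesis
    unfolding rho_def using assms(3,4) by (intro cInf_lower) blast+
qed

lemma rho_less_imp_mu_less:
  assumes "a \<noteq> {}" "b \<noteq> {}" "rho a b < d"
  obtains \<alpha> \<beta> where "\<alpha> \<in> a" "\<beta> \<in> b" "mu \<alpha> \<beta> < d"
proof -
  have "{mu \<alpha> \<beta> | \<alpha> \<beta>. \<alpha> \<in> a \<and> \<beta> \<in> b} \<noteq> {}"
    using assms(1,2) by blast
  from cInf_lessD[OF this assms(3)[unfolded rho_def]] show ?thesis
    using that by blast
qed

lemma rho_induced_le:
  fixes f :: "'a::metric_space \<Rightarrow> 'b::metric_space" and a b :: "(real^'n \<Rightarrow> 'a) set"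
  assumes "continuous_on UNIV f" "f x0 = y0"
    and "\<And>x x'. dist x x' < d \<Longrightarrow> dist (f x) (f x') \<le> c"
    and a: "a \<in> pi_n x0" and b: "b \<in> pi_n x0" and "rho a b < d"
  shows "rho (induced f y0 a) (induced f y0 b) \<le> c"
proof -
  obtain \<alpha> \<beta> where "\<alpha> \<in> a" "\<beta> \<in> b" and "mu \<alpha> \<beta> < d"
    using rho_less_imp_mu_less pi_n_elem_nonempty a b \<open>rho a b < d\<close> by metis
  moreover have \<alpha>: "\<alpha> \<in> Omega x0" and \<beta>: "\<beta> \<in> Omega x0"
    using \<open>\<alpha> \<in> a\<close> \<open>\<beta> \<in> b\<close> a b pi_n_elem_subset_Omega by blast+
  ultimately have "rho (induced f y0 a) (induced f y0 b) \<le> mu (f \<circ> \<alpha>) (f \<circ> \<beta>)"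
    using assms(1,2)
    by (intro rho_le_mu[OF induced_subset_Omega induced_subset_Omega] comp_in_induced)
  also have "\<dots> \<le> c"
    using \<alpha> \<beta> \<open>mu \<alpha> \<beta> < d\<close> assms(3) by (intro mu_comp_le continuous_on_Omega)
  finally show ?thesis .
qed

theorem proposition4p8:
  fixes f :: "'a::metric_space \<Rightarrow> 'b::metric_space"
    and x0 :: 'a and y0 :: 'b
  assumes "uniformly_continuous_on UNIV f"
    and "f x0 = y0"
  shows "\<forall>e>0. \<exists>\<delta>>0. \<forall>a\<in>(pi_n x0 :: (real^'n \<Rightarrow> 'a) set set). \<forall>b\<in>pi_n x0.
           rho a b < \<delta> \<longrightarrow> rho (induced f y0 a) (induced f y0 b) < e"
proof (intro allI impI)
  fix e :: real
  assume "e > 0"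
  then obtain d where "d > 0" and d: "\<And>x x'. dist x x' < d \<Longrightarrow> dist (f x) (f x') \<le> e/2"
    using assms(1) unfolding uniformly_continuous_on_def
    by (metis UNIV_I half_gt_zero less_imp_le)
  have f_cont: "continuous_on UNIV f"
    using assms(1) uniformly_continuous_imp_continuous by blast
  have "rho (induced f y0 a) (induced f y0 b) \<le> e/2"
    if "a \<in> pi_n x0" "b \<in> pi_n x0" "rho a b < d" for a b :: "(real^'n \<Rightarrow> 'a) set"
    by (rule rho_induced_le[OF f_cont assms(2) d that])
  moreover have "e/2 < e"
    using \<open>e > 0\<close> by simp
  ultimately show "\<exists>\<delta>>0. \<forall>a\<in>(pi_n x0 :: (real^'n \<Rightarrow> 'a) set set). \<forall>b\<in>pi_n x0.
           rho a b < \<delta> \<longrightarrow> rho (induced f y0 a) (induced f y0 b) < e"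
    using \<open>d > 0\<close> by (meson le_less_trans)
qed

end
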